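(* Let $T>0$, $0<\epsilon$, $G(x)=\sqrt{x^2+\epsilon^2}$, and let $\hat\rho$ and $\hat g=-\hat\rho_t\hat\rho_x$ be as in the context. Then $G(\hat\rho_x)$ is an entropy sub-solution of $$w_t+(\hat g\,f_\epsilon(w))_x=0\ \text{in }Q_T,\qquad w(\cdot,0)=G(\hat\rho_x(\cdot,0))\ \text{in }\mathbb{R}.$$
   Context: $Q_T=\mathbb{R}\times(0,T)$, $I=(0,1)$. Let $\rho^0\in C_0^\infty(I)$ and $\rho$ the solution of $\rho_t=\rho_{xx}$ in $I\times(0,\infty)$, $\rho(\cdot,0)=\rho^0$, $\rho(0,t)=\rho(1,t)=0$. Define $\hat\rho$ on $[0,2]\times[0,T]$ by $\hat\rho=\rho$ on $[0,1]\times[0,T]$ and $\hat\rho(x,t)=-\rho(2-x,t)$ for $x\in(1,2]$, and extend it to $\mathbb{R}\times[0,T]$ by $2$-periodicity in $x$. For $a>0$, $f_a(x)=1/x$ if $x\ge a$ and $f_a(x)=\frac{2a-x}{a^2+a^2(x-a)^2}$ if $x<a$. Entropy sub-solution of $v_t+(g f(v))_x=0$, $v(\cdot,0)=v^0\in L^\infty$ (with $g,g_x\in L^\infty_{loc}$, $f\in C^1$): $v\in L^\infty(Q_T)$ such that for every $\phi\in C_0^1(\mathbb{R}\times[0,T);[0,\infty))$, every non-decreasing convex $\eta\in C^1$, $\Phi\in C^1$ with $\Phi'=f'\eta'$, $h=\Phi-f\eta'$: $\int_{Q_T}[\eta(v)\phi_t+\Phi(v)g\phi_x+h(v)g_x\phi]\,dx\,dt+\int_{\mathbb{R}}\eta(v^0)\phi(x,0)\,dx\ge0$.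 *)

theory Defs
  imports "HOL-Analysis.Analysis"
begin

definition QT :: "real \<Rightarrow> (real \<times> real) set" where
  "QT T = UNIV \<times> {0<..<T}"

definition f_a :: "real \<Rightarrow> real \<Rightarrow> real" where
  "f_a a x = (if x \<ge> a then 1 / x else (2*a - x) / (a^2 + a^2 * (x - a)^2))"

definition G_eps :: "real \<Rightarrow> real \<Rightarrow> real" where
  "G_eps \<epsilon> x = sqrt (x^2 + \<epsilon>^2)"

text \<open>Odd reflection across x = 1 and 2-periodic extension in x.\<close>
definition rho_hat :: "(real \<Rightarrow> real \<Rightarrow> real) \<Rightarrow> real \<Rightarrow> real \<Rightarrow> real" where
  "rho_hat \<rho> x t = (let y = x - 2 * of_int \<lfloor>x / 2\<rfloor> in
      if y \<le> 1 then \<rho> y t else - \<rho> (2 - y) t)"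

definition rho_hat_x :: "(real \<Rightarrow> real \<Rightarrow> real) \<Rightarrow> real \<Rightarrow> real \<Rightarrow> real" where
  "rho_hat_x \<rho> x t = deriv (\<lambda>y. rho_hat \<rho> y t) x"

definition rho_hat_t :: "(real \<Rightarrow> real \<Rightarrow> real) \<Rightarrow> real \<Rightarrow> real \<Rightarrow> real" where
  "rho_hat_t \<rho> x t = deriv (\<lambda>s. rho_hat \<rho> x s) t"

definition g_hat :: "(real \<Rightarrow> real \<Rightarrow> real) \<Rightarrow> real \<times> real \<Rightarrow> real" where
  "g_hat \<rho> z = - rho_hat_t \<rho> (fst z) (snd z) * rho_hat_x \<rho> (fst z) (snd z)"

text \<open>Nonnegative C^1 test functions with compact support in R x [0,T)
  (represented by C^1 functions on R^2 with compact support in R x (-inf,T),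
  nonnegative for t >= 0); phx, pht are the partial derivatives.\<close>
definition test_fun ::
  "real \<Rightarrow> (real \<times> real \<Rightarrow> real) \<Rightarrow> (real \<times> real \<Rightarrow> real) \<Rightarrow> (real \<times> real \<Rightarrow> real) \<Rightarrow> bool" where
  "test_fun T \<phi> \<phi>x \<phi>t \<longleftrightarrow>
     (\<forall>z. (\<phi> has_derivative (\<lambda>(h,k). \<phi>x z * h + \<phi>t z * k)) (at z)) \<and>
     continuous_on UNIV \<phi>x \<and> continuous_on UNIV \<phi>t \<and>
     (\<forall>x t. t \<ge> 0 \<longrightarrow> \<phi> (x,t) \<ge> 0) \<and>
     (\<exists>K. compact K \<and> K \<subseteq> {z. snd z < T} \<and> (\<forall>z. z \<notin> K \<longrightarrow> \<phi> z = 0))"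

definition entropy_subsol ::
  "real \<Rightarrow> (real \<times> real \<Rightarrow> real) \<Rightarrow> (real \<Rightarrow> real) \<Rightarrow> (real \<times> real \<Rightarrow> real) \<Rightarrow> (real \<Rightarrow> real) \<Rightarrow> bool" where
  "entropy_subsol T g f v v0 \<longleftrightarrow>
     set_borel_measurable lborel (QT T) v \<and>
     (\<exists>C. AE z in lborel. z \<in> QT T \<longrightarrow> \<bar>v z\<bar> \<le> C) \<and>
     (\<forall>\<phi> \<phi>x \<phi>t \<eta> \<eta>' \<Phi>.
        test_fun T \<phi> \<phi>x \<phi>t \<and>
        (\<forall>u. (\<eta> has_real_derivative \<eta>' u) (at u)) \<and> continuous_on UNIV \<eta>' \<and>
        mono \<eta> \<and> convex_on UNIV \<eta> \<and>
        (\<forall>u. (\<Phi> has_real_derivative (deriv f u * \<eta>' u)) (at u))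
        \<longrightarrow>
        (let h = (\<lambda>u. \<Phi> u - f u * \<eta>' u);
             gx = (\<lambda>z. deriv (\<lambda>y. g (y, snd z)) (fst z));
             F = (\<lambda>z. \<eta> (v z) * \<phi>t z + \<Phi> (v z) * g z * \<phi>x z + h (v z) * gx z * \<phi> z);
             F0 = (\<lambda>x. \<eta> (v0 x) * \<phi> (x, 0))
         in set_integrable lborel (QT T) F \<and> integrable lborel F0 \<and>
            (LINT z:QT T|lborel. F z) + (LINT x|lborel. F0 x) \<ge> 0))"

end

theory Submission
  imports Defs "HOL-Probability.Distributions" "HOL-Real_Asymp.Real_Asymp"
begin

text \<open>
  The odd 2-periodic extension of \<rho>^0 is smooth with bounded derivatives, so its Gaussian
  smoothing u(x,t) = E[ext(x - sqrt(2t) Z)], Z standard normal, is a classical solution of the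
  heat equation on the whole line with bounded continuous x-derivatives (Stein's identity turns
  the derivative in sqrt(2t) into a second x-derivative). By the maximum principle on [0,1],
  \<rho> = u there, and oddness and periodicity of u give \<rho>-hat = u for t \<ge> 0. Hence \<rho>-hat is
  smooth and \<rho>-hat_t = \<rho>-hat_xx.

  Put v = \<rho>-hat_x and w = G(v) \<ge> \<epsilon>, so that f_\<epsilon>(w) = 1/w. A direct computation gives
    \<eta>(w) \<phi>_t + \<Phi>(w) g \<phi>_x + h(w) g_x \<phi> = (\<eta>(w) \<phi>)_t + (\<Phi>(w) g \<phi>)_x + \<eta>'(w) \<phi> \<epsilon>^2 v_x^2 / w^3.
  Integrated over Q_T the first term gives - \<integral> \<eta>(w(x,0)) \<phi>(x,0) dx, the second vanishes, and
  the last is nonnegative because \<eta> is nondecreasing and \<phi> \<ge> 0.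
\<close>

section \<open>One-variable calculus\<close>

lemma has_real_derivative_if_quadratic_remainder:
  fixes F :: "real \<Rightarrow> real"
  assumes remainder: "\<And>d. \<bar>F (x + d) - F x - d * L\<bar> \<le> C * d\<^sup>2"
  shows "(F has_real_derivative L) (at x)"
proof -
  have "((\<lambda>h. (F (x + h) - F x) / h - L) \<longlongrightarrow> 0) (at 0)"
  proof (rule Lim_null_comparison)
    show "\<forall>\<^sub>F h in at 0. norm ((F (x + h) - F x) / h - L) \<le> C * \<bar>h\<bar>"
    proof (rule eventually_at_topological[THEN iffD2, OF exI[of _ UNIV]], clarsimp)
      fix h :: real assume "h \<noteq> 0"
      have "\<bar>(F (x + h) - F x) / h - L\<bar> = \<bar>F (x + h) - F x - h * L\<bar> / \<bar>h\<bar>"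
        using \<open>h \<noteq> 0\<close> by (simp add: field_simps flip: abs_divide)
      also have "\<dots> \<le> C * h\<^sup>2 / \<bar>h\<bar>"
        using remainder[of h] by (simp add: divide_right_mono)
      also have "\<dots> = C * \<bar>h\<bar>"
        using \<open>h \<noteq> 0\<close>
        by (metis abs_mult_self_eq nonzero_mult_div_cancel_right power2_eq_square
            times_divide_eq_right zero_less_abs_iff less_irrefl)
      finally show "\<bar>(F (x + h) - F x) / h - L\<bar> \<le> C * \<bar>h\<bar>" .
    qed
    show "((\<lambda>h. C * \<bar>h\<bar>) \<longlongrightarrow> 0) (at 0)"
      by (auto intro!: tendsto_eq_intros)
  qed
  then show ?thesis
    by (simp add: DERIV_def LIM_zero_iff)
qed

lemma second_order_remainder_bound:
  fixes f f' f'' :: "real \<Rightarrow> real"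
  assumes f': "\<And>x. (f has_real_derivative f' x) (at x)"
    and f'': "\<And>x. (f' has_real_derivative f'' x) (at x)"
    and bound: "\<And>x. \<bar>f'' x\<bar> \<le> M"
  shows "\<bar>f (y + d) - f y - d * f' y\<bar> \<le> M * d\<^sup>2"
proof -
  have "M \<ge> 0"
    using bound[of 0] by linarith
  have lipschitz: "\<bar>f' x - f' y\<bar> \<le> M * \<bar>x - y\<bar>" for x
    using field_differentiable_bound[of UNIV f' f'' M x y] f'' bound by auto
  have "norm (f (y + d) - f y - ((y + d) - y) *\<^sub>R f' y) \<le> norm ((y + d) - y) * (M * \<bar>d\<bar>)"
  proof (rule vector_differentiable_bound_linearization[of "closed_segment y (y + d)" f f'])
    show "(f has_vector_derivative f' x) (at x within closed_segment y (y + d))" for x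
      using f'[of x] by (simp add: has_real_derivative_iff_has_vector_derivative has_vector_derivative_at_within)
    show "norm (f' x - f' y) \<le> M * \<bar>d\<bar>" if "x \<in> closed_segment y (y + d)" for x
    proof -
      have "\<bar>x - y\<bar> \<le> \<bar>d\<bar>"
        using dist_in_closed_segment[OF that] by (simp add: dist_real_def)
      then have "M * \<bar>x - y\<bar> \<le> M * \<bar>d\<bar>"
        using \<open>M \<ge> 0\<close> by (rule mult_left_mono)
      then show ?thesis
        using lipschitz[of x] by simp
    qed
  qed auto
  then show ?thesis
    by (simp add: abs_mult power2_eq_square mult_ac)
qed

lemma DERIV_sqrt_square_plus_square:
  fixes g :: "real \<Rightarrow> real"
  assumes "e > 0" and "(g has_real_derivative g') (at y)"
  shows "((\<lambda>y. sqrt ((g y)\<^sup>2 + e\<^sup>2)) has_real_derivative g y * g' / sqrt ((g y)\<^sup>2 + e\<^sup>2)) (at y)"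
proof -
  have "(g y)\<^sup>2 + e\<^sup>2 > 0"
    using assms(1) by (simp add: add_nonneg_pos)
  have "((\<lambda>y. (g y)\<^sup>2 + e\<^sup>2) has_real_derivative 2 * g y * g') (at y)"
    using assms(2) by (auto intro!: derivative_eq_intros)
  from DERIV_chain2[OF DERIV_real_sqrt[OF \<open>(g y)\<^sup>2 + e\<^sup>2 > 0\<close>] this]
  show ?thesis
    by (simp add: field_simps)
qed

section \<open>Uniqueness for the heat equation on the unit interval\<close>

definition solves_heat_eq :: "(real \<Rightarrow> real \<Rightarrow> real) \<Rightarrow> bool" where
  "solves_heat_eq w \<longleftrightarrow> (\<forall>x t. 0 < x \<and> x < 1 \<and> 0 < t \<longrightarrow>
     (\<forall>y\<in>{0<..<1}. (\<lambda>z. w z t) differentiable (at y)) \<and>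
     (\<exists>D. (deriv (\<lambda>z. w z t) has_real_derivative D) (at x) \<and>
          ((\<lambda>s. w x s) has_real_derivative D) (at t)))"

lemma solves_heat_eq_diff:
  assumes w1: "solves_heat_eq w1" and w2: "solves_heat_eq w2"
  shows "solves_heat_eq (\<lambda>x t. w1 x t - w2 x t)"
  unfolding solves_heat_eq_def
proof (intro allI impI conjI)
  fix x t :: real
  assume xt: "0 < x \<and> x < 1 \<and> 0 < t"
  then have diff: "(\<lambda>z. w1 z t) differentiable (at y)" "(\<lambda>z. w2 z t) differentiable (at y)"
    if "y \<in> {0<..<1}" for y
    using w1 w2 that by (auto simp: solves_heat_eq_def)
  then show "\<forall>y\<in>{0<..<1}. (\<lambda>z. w1 z t - w2 z t) differentiable (at y)"
    by auto
  obtain D1 D2 where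
    D1: "(deriv (\<lambda>z. w1 z t) has_real_derivative D1) (at x)" "((\<lambda>s. w1 x s) has_real_derivative D1) (at t)"
    and D2: "(deriv (\<lambda>z. w2 z t) has_real_derivative D2) (at x)" "((\<lambda>s. w2 x s) has_real_derivative D2) (at t)"
    using w1 w2 xt unfolding solves_heat_eq_def by meson
  have "deriv (\<lambda>z. w1 z t - w2 z t) y = deriv (\<lambda>z. w1 z t) y - deriv (\<lambda>z. w2 z t) y"
    if "y \<in> {0<..<1}" for y
    using diff[OF that] by (intro DERIV_imp_deriv DERIV_diff) (auto simp: DERIV_deriv_iff_real_differentiable)
  then have "(deriv (\<lambda>z. w1 z t - w2 z t) has_real_derivative D1 - D2) (at x)"
    by (intro has_field_derivative_transform_within_open[OF DERIV_diff[OF D1(1) D2(1)], of "{0<..<1}"])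
       (use xt in auto)
  moreover have "((\<lambda>s. w1 x s - w2 x s) has_real_derivative D1 - D2) (at t)"
    using D1(2) D2(2) by (rule DERIV_diff)
  ultimately show "\<exists>D. (deriv (\<lambda>z. w1 z t - w2 z t) has_real_derivative D) (at x) \<and>
      ((\<lambda>s. w1 x s - w2 x s) has_real_derivative D) (at t)"
    by blast
qed

lemma second_derivative_nonpos_at_interior_max:
  fixes f f' :: "real \<Rightarrow> real"
  assumes f': "\<And>y. y \<in> {a<..<b} \<Longrightarrow> (f has_real_derivative f' y) (at y)"
    and f'': "(f' has_real_derivative D) (at x)"
    and x: "x \<in> {a<..<b}" and max: "\<And>y. y \<in> {a<..<b} \<Longrightarrow> f y \<le> f x"
  shows "D \<le> 0"
proof (rule ccontr)
  assume "\<not> D \<le> 0"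
  have "f' x = 0"
    by (rule DERIV_local_max[OF f'[OF x], of "min (x - a) (b - x)"])
       (use x max in \<open>auto simp: abs_less_iff\<close>)
  obtain d where "d > 0" and increasing: "\<And>h. 0 < h \<Longrightarrow> h < d \<Longrightarrow> f' x < f' (x + h)"
    using DERIV_pos_inc_right[OF f''] \<open>\<not> D \<le> 0\<close> by auto
  define y where "y = x + min d (b - x) / 2"
  have y: "x < y" "y < b" "y - x < d"
    using x \<open>d > 0\<close> by (auto simp: y_def min_def field_simps)
  obtain \<xi> where \<xi>: "x < \<xi>" "\<xi> < y" "f y - f x = (y - x) * f' \<xi>"
    using MVT2[OF \<open>x < y\<close>, of f f'] f' x y by force
  have "0 < f' \<xi>"
    using increasing[of "\<xi> - x"] \<xi> y \<open>f' x = 0\<close> by simp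
  then have "0 < (y - x) * f' \<xi>"
    using \<open>x < y\<close> by simp
  then have "f x < f y"
    using \<xi>(3) by linarith
  with max[of y] x y show False
    by simp
qed

lemma derivative_nonneg_at_left_max:
  fixes g :: "real \<Rightarrow> real"
  assumes g': "(g has_real_derivative D) (at t)" and "d > 0"
    and max: "\<And>s. t - d < s \<Longrightarrow> s < t \<Longrightarrow> g s \<le> g t"
  shows "D \<ge> 0"
proof (rule ccontr)
  assume "\<not> D \<ge> 0"
  then obtain e where "e > 0" and decreasing: "\<And>h. 0 < h \<Longrightarrow> h < e \<Longrightarrow> g t < g (t - h)"
    using DERIV_neg_dec_left[OF g'] by auto
  have "g t < g (t - min d e / 2)"
    using decreasing \<open>d > 0\<close> \<open>e > 0\<close> by simp
  moreover have "g (t - min d e / 2) \<le> g t"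
    using max \<open>d > 0\<close> \<open>e > 0\<close> by simp
  ultimately show False
    by simp
qed

lemma perturbed_heat_solution_no_interior_max:
  fixes w :: "real \<Rightarrow> real \<Rightarrow> real"
  assumes heat: "solves_heat_eq w" and "\<delta> > 0"
    and x0: "x0 \<in> {0<..<1}" and "0 < t0" "t0 \<le> t1"
    and max: "\<And>x t. x \<in> {0..1} \<Longrightarrow> t \<in> {0..t1} \<Longrightarrow> w x t - \<delta> * t \<le> w x0 t0 - \<delta> * t0"
  shows False
proof -
  have "0 < x0 \<and> x0 < 1 \<and> 0 < t0"
    using x0 \<open>0 < t0\<close> by simp
  with heat obtain D where
    diff: "\<forall>y\<in>{0<..<1}. (\<lambda>z. w z t0) differentiable (at y)"
    and Dx: "(deriv (\<lambda>z. w z t0) has_real_derivative D) (at x0)"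
    and Dt: "((\<lambda>s. w x0 s) has_real_derivative D) (at t0)"
    unfolding solves_heat_eq_def by blast
  have "D \<le> 0"
  proof (rule second_derivative_nonpos_at_interior_max[OF _ Dx x0])
    show "((\<lambda>z. w z t0) has_real_derivative deriv (\<lambda>z. w z t0) y) (at y)" if "y \<in> {0<..<1}" for y
      using diff that by (simp add: DERIV_deriv_iff_real_differentiable)
    show "w y t0 \<le> w x0 t0" if "y \<in> {0<..<1}" for y
      using max[of y t0] that \<open>0 < t0\<close> \<open>t0 \<le> t1\<close> by simp
  qed
  moreover have "D - \<delta> \<ge> 0"
  proof (rule derivative_nonneg_at_left_max[OF _ \<open>0 < t0\<close>])
    show "((\<lambda>s. w x0 s - \<delta> * s) has_real_derivative D - \<delta>) (at t0)"
      using Dt by (auto intro!: derivative_eq_intros)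
    show "w x0 s - \<delta> * s \<le> w x0 t0 - \<delta> * t0" if "t0 - t0 < s" "s < t0" for s
      using max[of x0 s] that x0 \<open>t0 \<le> t1\<close> by simp
  qed
  ultimately show False
    using \<open>\<delta> > 0\<close> by simp
qed

text \<open>If w were positive somewhere, the maximum of w - \<delta> t over [0,1] \<times> [0,t1] would be
  positive for small \<delta> > 0, hence attained in the parabolic interior.\<close>

lemma heat_max_principle:
  fixes w :: "real \<Rightarrow> real \<Rightarrow> real"
  assumes cont: "continuous_on ({0..1} \<times> {0..}) (\<lambda>(x, t). w x t)"
    and heat: "solves_heat_eq w"
    and boundary: "\<And>t. t > 0 \<Longrightarrow> w 0 t \<le> 0 \<and> w 1 t \<le> 0"
    and initial: "\<And>x. x \<in> {0..1} \<Longrightarrow> w x 0 \<le> 0"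
    and x1: "x1 \<in> {0..1}" and "t1 \<ge> 0"
  shows "w x1 t1 \<le> 0"
proof (rule ccontr)
  assume "\<not> w x1 t1 \<le> 0"
  then have "t1 > 0"
    using initial[OF x1] \<open>t1 \<ge> 0\<close> by (cases "t1 = 0") auto
  define \<delta> where "\<delta> = w x1 t1 / (2 * t1)"
  have "\<delta> > 0"
    using \<open>\<not> w x1 t1 \<le> 0\<close> \<open>t1 > 0\<close> by (simp add: \<delta>_def)
  define v where "v x t = w x t - \<delta> * t" for x t
  define K where "K = {0..1::real} \<times> {0..t1}"
  have "continuous_on K (\<lambda>p. w (fst p) (snd p))"
    by (rule continuous_on_subset[OF cont[unfolded case_prod_beta']]) (auto simp: K_def)
  then have "continuous_on K (\<lambda>p. v (fst p) (snd p))"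
    unfolding v_def by (intro continuous_intros)
  moreover have "compact K" "K \<noteq> {}"
    using \<open>t1 > 0\<close> by (auto simp: K_def intro: compact_Times)
  ultimately obtain x0 t0 where "(x0, t0) \<in> K" and max: "\<And>x t. (x, t) \<in> K \<Longrightarrow> v x t \<le> v x0 t0"
    using continuous_attains_sup[of K "\<lambda>p. v (fst p) (snd p)"] by fastforce
  have "v x1 t1 = w x1 t1 / 2"
    using \<open>t1 > 0\<close> by (simp add: v_def \<delta>_def)
  then have "v x0 t0 > 0"
    using max[of x1 t1] x1 \<open>t1 > 0\<close> \<open>\<not> w x1 t1 \<le> 0\<close> by (simp add: K_def)
  have "t0 > 0"
    using \<open>v x0 t0 > 0\<close> \<open>(x0, t0) \<in> K\<close> initial[of x0] by (cases "t0 = 0") (auto simp: v_def K_def)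
  then have "v 0 t0 < 0" "v 1 t0 < 0"
    using boundary[of t0] mult_pos_pos[OF \<open>\<delta> > 0\<close> \<open>t0 > 0\<close>] by (simp_all add: v_def)
  then have "x0 \<in> {0<..<1}"
    using \<open>v x0 t0 > 0\<close> \<open>(x0, t0) \<in> K\<close> by (auto simp: K_def less_le)
  show False
    by (rule perturbed_heat_solution_no_interior_max[OF heat \<open>\<delta> > 0\<close> \<open>x0 \<in> {0<..<1}\<close> \<open>t0 > 0\<close>])
       (use max \<open>(x0, t0) \<in> K\<close> in \<open>auto simp: v_def K_def\<close>)
qed

lemma heat_uniqueness:
  fixes w1 w2 :: "real \<Rightarrow> real \<Rightarrow> real"
  assumes "continuous_on ({0..1} \<times> {0..}) (\<lambda>(x, t). w1 x t)" "solves_heat_eq w1"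
    and "continuous_on ({0..1} \<times> {0..}) (\<lambda>(x, t). w2 x t)" "solves_heat_eq w2"
    and "\<And>t. t > 0 \<Longrightarrow> w1 0 t = w2 0 t \<and> w1 1 t = w2 1 t"
    and "\<And>x. x \<in> {0..1} \<Longrightarrow> w1 x 0 = w2 x 0"
    and "x \<in> {0..1}" "t \<ge> 0"
  shows "w1 x t = w2 x t"
proof -
  have "v1 x t - v2 x t \<le> 0"
    if "continuous_on ({0..1} \<times> {0..}) (\<lambda>(x, t). v1 x t)" "solves_heat_eq v1"
      and "continuous_on ({0..1} \<times> {0..}) (\<lambda>(x, t). v2 x t)" "solves_heat_eq v2"
      and "\<And>t. t > 0 \<Longrightarrow> v1 0 t = v2 0 t \<and> v1 1 t = v2 1 t"
      and "\<And>x. x \<in> {0..1} \<Longrightarrow> v1 x 0 = v2 x 0"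
    for v1 v2 :: "real \<Rightarrow> real \<Rightarrow> real"
  proof (rule heat_max_principle[where w = "\<lambda>x t. v1 x t - v2 x t"])
    show "continuous_on ({0..1} \<times> {0..}) (\<lambda>(x, t). v1 x t - v2 x t)"
      using continuous_on_diff[OF that(1,3)] by (simp add: case_prod_beta')
    show "solves_heat_eq (\<lambda>x t. v1 x t - v2 x t)"
      using that(2,4) by (rule solves_heat_eq_diff)
  qed (use that assms(7,8) in auto)
  from this[of w1 w2] this[of w2 w1] assms show ?thesis
    by force
qed

section \<open>Gaussian integrals\<close>

lemma DERIV_std_normal_density:
  "(std_normal_density has_real_derivative - z * std_normal_density z) (at z)"
  unfolding std_normal_density_def[abs_def]
  by (auto intro!: derivative_eq_intros simp: field_simps)

lemma std_normal_density_tendsto_0: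
  shows "(std_normal_density \<longlongrightarrow> 0) at_top" and "(std_normal_density \<longlongrightarrow> 0) at_bot"
  unfolding std_normal_density_def[abs_def] by real_asymp+

lemma integral_std_normal_second_moment: "(\<integral>z. std_normal_density z * z\<^sup>2 \<partial>lborel) = 1"
  using integral_std_normal_moment_even[of 1] by simp

lemma integrable_std_normal_moment_abs_mult_bounded:
  fixes g :: "real \<Rightarrow> real"
  assumes [measurable]: "g \<in> borel_measurable borel" and bound: "\<And>z. \<bar>g z\<bar> \<le> C"
  shows "integrable lborel (\<lambda>z. std_normal_density z * \<bar>z\<bar> ^ k * g z)"
proof (rule Bochner_Integration.integrable_bound)
  show "integrable lborel (\<lambda>z. \<bar>C\<bar> * (std_normal_density z * \<bar>z\<bar> ^ k))"
    using integrable_std_normal_moment_abs by (rule integrable_mult_right)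
  have "\<bar>g z\<bar> * (std_normal_density z * \<bar>z\<bar> ^ k) \<le> \<bar>C\<bar> * (std_normal_density z * \<bar>z\<bar> ^ k)" for z
    using bound[of z] by (intro mult_right_mono) auto
  then show "AE z in lborel. norm (std_normal_density z * \<bar>z\<bar> ^ k * g z)
      \<le> norm (\<bar>C\<bar> * (std_normal_density z * \<bar>z\<bar> ^ k))"
    by (simp add: abs_mult mult_ac)
qed measurable

lemma integrable_std_normal_mult_bounded:
  fixes g :: "real \<Rightarrow> real"
  assumes "g \<in> borel_measurable borel" and "\<And>z. \<bar>g z\<bar> \<le> C"
  shows "integrable lborel (\<lambda>z. std_normal_density z * g z)"
  using integrable_std_normal_moment_abs_mult_bounded[OF assms, where k = 0] by simp

lemma integrable_std_normal_first_moment_mult_bounded: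
  fixes g :: "real \<Rightarrow> real"
  assumes [measurable]: "g \<in> borel_measurable borel" and bound: "\<And>z. \<bar>g z\<bar> \<le> C"
  shows "integrable lborel (\<lambda>z. std_normal_density z * z * g z)"
proof -
  have "0 \<le> C"
    using bound[of 0] by linarith
  have "integrable lborel (\<lambda>z. std_normal_density z * \<bar>z\<bar> ^ 1 * (sgn z * g z))"
    by (rule integrable_std_normal_moment_abs_mult_bounded[where C = C])
       (use bound \<open>0 \<le> C\<close> in \<open>auto simp: abs_mult abs_sgn_eq\<close>)
  moreover have "(\<lambda>z. std_normal_density z * \<bar>z\<bar> ^ 1 * (sgn z * g z)) = (\<lambda>z. std_normal_density z * z * g z)"
    by (auto simp: fun_eq_iff sgn_if)
  ultimately show ?thesis
    by simp
qed

lemma abs_integral_le_std_normal_moment: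
  assumes "integrable lborel E" and "\<And>z. \<bar>E z\<bar> \<le> c * (std_normal_density z * z ^ k)"
  shows "\<bar>integral\<^sup>L lborel E\<bar> \<le> c * (\<integral>z. std_normal_density z * z ^ k \<partial>lborel)"
proof -
  have "norm (integral\<^sup>L lborel E) \<le> (\<integral>z. c * (std_normal_density z * z ^ k) \<partial>lborel)"
    by (rule Bochner_Integration.integral_norm_bound_integral)
       (use assms integrable_std_normal_moment in auto)
  then show ?thesis
    by simp
qed

lemma std_normal_density_mult_bounded_tendsto_0:
  fixes g :: "real \<Rightarrow> real"
  assumes bound: "\<And>z. \<bar>g z\<bar> \<le> C" and "(std_normal_density \<longlongrightarrow> 0) L"
  shows "((\<lambda>z. std_normal_density z * g z) \<longlongrightarrow> 0) L"
proof (rule Lim_null_comparison)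
  have "norm (std_normal_density z * g z) \<le> \<bar>C\<bar> * std_normal_density z" for z
  proof -
    have "\<bar>g z\<bar> \<le> \<bar>C\<bar>"
      using bound[of z] by linarith
    from mult_left_mono[OF this normal_density_nonneg] show ?thesis
      by (simp add: abs_mult mult.commute)
  qed
  then show "\<forall>\<^sub>F z in L. norm (std_normal_density z * g z) \<le> \<bar>C\<bar> * std_normal_density z"
    by simp
  show "((\<lambda>z. \<bar>C\<bar> * std_normal_density z) \<longlongrightarrow> 0) L"
    using tendsto_mult_right_zero[OF assms(2)] .
qed

lemma std_normal_stein_identity:
  fixes g g' :: "real \<Rightarrow> real"
  assumes g': "\<And>y. (g has_real_derivative g' y) (at y)" and "continuous_on UNIV g'"
    and bound: "\<And>y. \<bar>g y\<bar> \<le> C" and bound': "\<And>y. \<bar>g' y\<bar> \<le> C'"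
  shows "(\<integral>z. std_normal_density z * z * g (x - s * z) \<partial>lborel)
    = - s * (\<integral>z. std_normal_density z * g' (x - s * z) \<partial>lborel)"
proof -
  have "continuous_on UNIV g"
    using g' by (meson DERIV_continuous continuous_at_imp_continuous_on)
  then have [measurable]: "g \<in> borel_measurable borel" "g' \<in> borel_measurable borel"
    using \<open>continuous_on UNIV g'\<close> by (auto intro: borel_measurable_continuous_onI)
  define F where "F z = std_normal_density z * g (x - s * z)" for z
  define f where "f z = - (std_normal_density z * z * g (x - s * z))
    - s * (std_normal_density z * g' (x - s * z))" for z
  have int1: "integrable lborel (\<lambda>z. std_normal_density z * z * g (x - s * z))"
    by (rule integrable_std_normal_first_moment_mult_bounded[where C = C]) (use bound in auto)
  have int2: "integrable lborel (\<lambda>z. std_normal_density z * g' (x - s * z))"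
    by (rule integrable_std_normal_mult_bounded[where C = C']) (use bound' in auto)
  have F': "(F has_real_derivative f z) (at z)" for z
  proof -
    have "((\<lambda>z. g (x - s * z)) has_real_derivative g' (x - s * z) * - s) (at z)"
      by (rule DERIV_chain2[OF g']) (auto intro!: derivative_eq_intros)
    from DERIV_mult[OF DERIV_std_normal_density this] show ?thesis
      unfolding F_def[abs_def] f_def by (rule DERIV_cong) (simp add: algebra_simps)
  qed
  have "continuous_on UNIV f"
    unfolding f_def std_normal_density_def
    by (intro continuous_intros continuous_on_compose2[OF \<open>continuous_on UNIV g\<close>]
        continuous_on_compose2[OF \<open>continuous_on UNIV g'\<close>]) auto
  have F_tendsto: "(F \<longlongrightarrow> 0) L" if "(std_normal_density \<longlongrightarrow> 0) L" for L
    unfolding F_def[abs_def]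
    by (rule std_normal_density_mult_bounded_tendsto_0[OF _ that]) (rule bound)
  have "(LBINT z=-\<infinity>..\<infinity>. f z) = 0 - 0"
  proof (rule interval_integral_FTC_integrable)
    show "set_integrable lborel (einterval (-\<infinity>) \<infinity>) f"
      using int1 int2 by (simp add: f_def[abs_def] einterval_eq_UNIV set_integrable_def)
    show "((F \<circ> real_of_ereal) \<longlongrightarrow> 0) (at_right (-\<infinity>))" "((F \<circ> real_of_ereal) \<longlongrightarrow> 0) (at_left \<infinity>)"
      unfolding ereal_tendsto_simps using F_tendsto std_normal_density_tendsto_0 by blast+
  qed (use F' \<open>continuous_on UNIV f\<close> in
       \<open>auto simp: has_real_derivative_iff_has_vector_derivative continuous_on_eq_continuous_at\<close>)
  then have "integral\<^sup>L lborel f = 0"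
    by (simp add: interval_lebesgue_integral_def einterval_eq_UNIV set_lebesgue_integral_def)
  then show ?thesis
    using int1 int2 by (simp add: f_def[abs_def])
qed

section \<open>The heat flow of the odd periodic extension of the initial datum\<close>

locale smooth_initial_datum =
  fixes r0 :: "real \<Rightarrow> real" and a b :: real
  assumes smooth: "\<forall>n x. (deriv ^^ n) r0 differentiable (at x)"
    and a_pos: "0 < a" and a_le_b: "a \<le> b" and b_less_1: "b < 1"
    and support: "\<forall>x. x < a \<or> b < x \<longrightarrow> r0 x = 0"
begin

text \<open>per_ext n is the n-th derivative of the odd 2-periodic extension of r0; odd_ext n is
  that of y \<mapsto> r0 y - r0 (-y), which vanishes outside [-b, b].\<close>

abbreviation r0_deriv :: "nat \<Rightarrow> real \<Rightarrow> real" where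
  "r0_deriv n \<equiv> (deriv ^^ n) r0"

definition odd_ext :: "nat \<Rightarrow> real \<Rightarrow> real" where
  "odd_ext n y = r0_deriv n y - (-1) ^ n * r0_deriv n (- y)"

definition period_index :: "real \<Rightarrow> int" where
  "period_index x = \<lfloor>(x + 1) / 2\<rfloor>"

definition per_ext :: "nat \<Rightarrow> real \<Rightarrow> real" where
  "per_ext n x = odd_ext n (x - 2 * of_int (period_index x))"

lemma r0_deriv_has_derivative: "(r0_deriv n has_real_derivative r0_deriv (Suc n) x) (at x)"
  using smooth by (simp add: DERIV_deriv_iff_real_differentiable)

lemma r0_deriv_eq_0: "x < a \<or> b < x \<Longrightarrow> r0_deriv n x = 0"
proof (induction n arbitrary: x)
  case 0
  then show ?case using support by auto
next
  case (Suc n)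
  have "open ({..<a} \<union> {b<..})" and "x \<in> {..<a} \<union> {b<..}"
    using Suc.prems by auto
  then have "(r0_deriv n has_real_derivative 0) (at x)"
    by (rule has_field_derivative_transform_within_open[OF DERIV_const]) (use Suc.IH in auto)
  then show ?case
    using r0_deriv_has_derivative DERIV_unique by blast
qed

lemma odd_ext_has_derivative: "(odd_ext n has_real_derivative odd_ext (Suc n) y) (at y)"
proof -
  have "((\<lambda>y. r0_deriv n (- y)) has_real_derivative r0_deriv (Suc n) (- y) * -1) (at y)"
    by (rule DERIV_chain2[OF r0_deriv_has_derivative]) (auto intro: derivative_eq_intros)
  from DERIV_diff[OF r0_deriv_has_derivative DERIV_cmult[OF this]] show ?thesis
    by (simp add: odd_ext_def[abs_def])
qed

lemma odd_ext_eq_0: "b < \<bar>y\<bar> \<Longrightarrow> odd_ext n y = 0"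
  unfolding odd_ext_def using r0_deriv_eq_0 a_pos a_le_b by (cases "y > 0") auto

lemma odd_ext_0_minus: "odd_ext 0 (- y) = - odd_ext 0 y"
  by (simp add: odd_ext_def)

lemma period_index_bounds:
  shows "-1 \<le> x - 2 * of_int (period_index x)" and "x - 2 * of_int (period_index x) < 1"
proof -
  have "of_int (period_index x) \<le> (x + 1) / 2" "(x + 1) / 2 < of_int (period_index x) + 1"
    unfolding period_index_def by linarith+
  then show "-1 \<le> x - 2 * of_int (period_index x)" and "x - 2 * of_int (period_index x) < 1"
    by (simp_all add: field_simps)
qed

text \<open>Any shift of x by an even integer into (b - 2, 2 - b) gives the same value, because the two
  shifted points either coincide or both lie outside the support [-b, b] of odd_ext.\<close>

lemma per_ext_eq_shift:
  assumes "\<bar>x - 2 * of_int k\<bar> < 2 - b"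
  shows "per_ext n x = odd_ext n (x - 2 * of_int k)"
proof (cases "k = period_index x")
  case False
  then have "2 \<le> \<bar>(x - 2 * of_int (period_index x)) - (x - 2 * of_int k)\<bar>"
    by (simp add: abs_if)
  then have "b < \<bar>x - 2 * of_int (period_index x)\<bar>" "b < \<bar>x - 2 * of_int k\<bar>"
    using period_index_bounds[of x] assms b_less_1 by linarith+
  then show ?thesis
    by (simp add: per_ext_def odd_ext_eq_0)
qed (simp add: per_ext_def)

lemma per_ext_has_derivative: "(per_ext n has_real_derivative per_ext (Suc n) x) (at x)"
proof -
  define k where "k = period_index x"
  have near_x: "per_ext m y = odd_ext m (y - 2 * of_int k)" if "y \<in> ball x (1 - b)" for m y
    by (rule per_ext_eq_shift)
       (use that period_index_bounds[of x] in \<open>auto simp: k_def dist_real_def abs_le_iff abs_less_iff\<close>)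
  have "((\<lambda>y. y - 2 * of_int k) has_real_derivative 1) (at x)"
    by (auto intro!: derivative_eq_intros)
  from DERIV_chain2[OF odd_ext_has_derivative this]
  have "((\<lambda>y. odd_ext n (y - 2 * of_int k)) has_real_derivative odd_ext (Suc n) (x - 2 * of_int k)) (at x)"
    by simp
  then have "(per_ext n has_real_derivative odd_ext (Suc n) (x - 2 * of_int k)) (at x)"
    by (rule has_field_derivative_transform_within_open[of _ _ _ "ball x (1 - b)"])
       (use b_less_1 near_x in auto)
  then show ?thesis
    using near_x[of x "Suc n"] b_less_1 by simp
qed

lemma continuous_on_per_ext: "continuous_on S (per_ext n)"
  using per_ext_has_derivative by (meson DERIV_continuous continuous_at_imp_continuous_on)

lemma borel_measurable_per_ext[measurable]: "per_ext n \<in> borel_measurable borel"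
  by (rule borel_measurable_continuous_onI[OF continuous_on_per_ext])

lemma per_ext_bounded: "\<exists>B. \<forall>x. \<bar>per_ext n x\<bar> \<le> B"
proof -
  have "continuous_on {-1..1} (odd_ext n)"
    using odd_ext_has_derivative by (meson DERIV_continuous continuous_at_imp_continuous_on)
  then obtain B where "\<forall>y\<in>{-1..1}. \<bar>odd_ext n y\<bar> \<le> B"
    using compact_imp_bounded[OF compact_continuous_image[OF _ compact_Icc]] bounded_iff
    by (metis image_eqI real_norm_def)
  then have "\<bar>per_ext n x\<bar> \<le> B" for x
    using period_index_bounds[of x] by (simp add: per_ext_def)
  then show ?thesis by blast
qed

definition per_ext_bound :: "nat \<Rightarrow> real" where
  "per_ext_bound n = (SOME B. \<forall>x. \<bar>per_ext n x\<bar> \<le> B)"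

lemma abs_per_ext_le: "\<bar>per_ext n x\<bar> \<le> per_ext_bound n"
  using someI_ex[OF per_ext_bounded[of n]] unfolding per_ext_bound_def by blast

lemma per_ext_bound_nonneg: "0 \<le> per_ext_bound n"
  using abs_per_ext_le[of n 0] by linarith

lemma per_ext_periodic: "per_ext n (x + 2 * of_int m) = per_ext n x"
proof -
  have "per_ext n (x + 2 * of_int m) = odd_ext n (x + 2 * of_int m - 2 * of_int (period_index x + m))"
    by (rule per_ext_eq_shift) (use period_index_bounds[of x] b_less_1 in auto)
  then show ?thesis
    by (simp add: per_ext_def)
qed

lemma per_ext_0_minus: "per_ext 0 (- x) = - per_ext 0 x"
proof -
  have "per_ext 0 (- x) = odd_ext 0 (- x - 2 * of_int (- period_index x))"
    by (rule per_ext_eq_shift) (use period_index_bounds[of x] b_less_1 in auto)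
  then show ?thesis
    using odd_ext_0_minus[of "x - 2 * of_int (period_index x)"] by (simp add: per_ext_def)
qed

lemma per_ext_0_eq: "x \<in> {0..1} \<Longrightarrow> per_ext 0 x = r0 x"
  using per_ext_eq_shift[of x 0 0] support a_pos b_less_1 by (simp add: odd_ext_def)

definition smoothed :: "nat \<Rightarrow> real \<Rightarrow> real \<Rightarrow> real" where
  "smoothed n x s = (\<integral>z. std_normal_density z * per_ext n (x - s * z) \<partial>lborel)"

lemma integrable_smoothed_integrand:
  shows "integrable lborel (\<lambda>z. std_normal_density z * per_ext n (x - s * z))"
    and "integrable lborel (\<lambda>z. std_normal_density z * z * per_ext n (x - s * z))"
  by (auto intro: integrable_std_normal_mult_bounded integrable_std_normal_first_moment_mult_bounded
      abs_per_ext_le)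

lemma per_ext_second_order_remainder:
  "\<bar>per_ext n (y + d) - per_ext n y - d * per_ext (Suc n) y\<bar> \<le> per_ext_bound (Suc (Suc n)) * d\<^sup>2"
  by (rule second_order_remainder_bound[OF per_ext_has_derivative per_ext_has_derivative abs_per_ext_le])

lemma smoothed_has_derivative_x:
  "((\<lambda>x. smoothed n x s) has_real_derivative smoothed (Suc n) x s) (at x)"
proof (rule has_real_derivative_if_quadratic_remainder[where C = "per_ext_bound (Suc (Suc n))"])
  fix d
  define E where "E z = std_normal_density z * per_ext n (x + d - s * z)
    - std_normal_density z * per_ext n (x - s * z) - d * (std_normal_density z * per_ext (Suc n) (x - s * z))"
    for z
  note integrable = integrable_smoothed_integrand(1)[of n "x + d" s]
    integrable_smoothed_integrand(1)[of n x s] integrable_smoothed_integrand(1)[of "Suc n" x s]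
  have "integral\<^sup>L lborel E = smoothed n (x + d) s - smoothed n x s - d * smoothed (Suc n) x s"
    unfolding E_def[abs_def] smoothed_def using integrable by simp
  moreover have "\<bar>integral\<^sup>L lborel E\<bar>
      \<le> per_ext_bound (Suc (Suc n)) * d\<^sup>2 * (\<integral>z. std_normal_density z * z ^ 0 \<partial>lborel)"
  proof (rule abs_integral_le_std_normal_moment)
    show "integrable lborel E"
      unfolding E_def[abs_def] using integrable by simp
    show "\<bar>E z\<bar> \<le> per_ext_bound (Suc (Suc n)) * d\<^sup>2 * (std_normal_density z * z ^ 0)" for z
    proof -
      have "E z = std_normal_density z * (per_ext n ((x - s * z) + d) - per_ext n (x - s * z)
          - d * per_ext (Suc n) (x - s * z))"
        by (simp add: E_def algebra_simps)
      with mult_left_mono[OF per_ext_second_order_remainder[of n "x - s * z" d] normal_density_nonneg]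
      show ?thesis
        by (simp add: abs_mult mult_ac)
    qed
  qed
  ultimately show "\<bar>smoothed n (x + d) s - smoothed n x s - d * smoothed (Suc n) x s\<bar>
      \<le> per_ext_bound (Suc (Suc n)) * d\<^sup>2"
    by simp
qed

lemma smoothed_has_derivative_s:
  "((\<lambda>s. smoothed n x s) has_real_derivative s * smoothed (Suc (Suc n)) x s) (at s)"
proof -
  define D where "D = - (\<integral>z. std_normal_density z * z * per_ext (Suc n) (x - s * z) \<partial>lborel)"
  have "((\<lambda>s. smoothed n x s) has_real_derivative D) (at s)"
  proof (rule has_real_derivative_if_quadratic_remainder[where C = "per_ext_bound (Suc (Suc n))"])
    fix d
    define E where "E z = std_normal_density z * per_ext n (x - (s + d) * z)
      - std_normal_density z * per_ext n (x - s * z)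
      + d * (std_normal_density z * z * per_ext (Suc n) (x - s * z))" for z
    note integrable = integrable_smoothed_integrand(1)[of n x "s + d"]
      integrable_smoothed_integrand(1)[of n x s] integrable_smoothed_integrand(2)[of "Suc n" x s]
    have "integral\<^sup>L lborel E = smoothed n x (s + d) - smoothed n x s - d * D"
      unfolding E_def[abs_def] smoothed_def D_def using integrable by simp
    moreover have "\<bar>integral\<^sup>L lborel E\<bar>
        \<le> per_ext_bound (Suc (Suc n)) * d\<^sup>2 * (\<integral>z. std_normal_density z * z\<^sup>2 \<partial>lborel)"
    proof (rule abs_integral_le_std_normal_moment)
      show "integrable lborel E"
        unfolding E_def[abs_def] using integrable by simp
      show "\<bar>E z\<bar> \<le> per_ext_bound (Suc (Suc n)) * d\<^sup>2 * (std_normal_density z * z\<^sup>2)" for z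
      proof -
        have "E z = std_normal_density z * (per_ext n ((x - s * z) + - d * z) - per_ext n (x - s * z)
            - (- d * z) * per_ext (Suc n) (x - s * z))"
          by (simp add: E_def algebra_simps)
        with mult_left_mono[OF per_ext_second_order_remainder[of n "x - s * z" "- d * z"]
            normal_density_nonneg]
        show ?thesis
          by (simp add: abs_mult mult_ac power_mult_distrib)
      qed
    qed
    ultimately show "\<bar>smoothed n x (s + d) - smoothed n x s - d * D\<bar> \<le> per_ext_bound (Suc (Suc n)) * d\<^sup>2"
      by (simp add: integral_std_normal_second_moment)
  qed
  moreover have "D = s * smoothed (Suc (Suc n)) x s"
    unfolding D_def smoothed_def
    by (simp add: std_normal_stein_identity[OF per_ext_has_derivative continuous_on_per_ext
          abs_per_ext_le abs_per_ext_le])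
  ultimately show ?thesis
    by simp
qed

lemma abs_smoothed_le: "\<bar>smoothed n x s\<bar> \<le> per_ext_bound n"
proof -
  have "\<bar>smoothed n x s\<bar> \<le> per_ext_bound n * (\<integral>z. std_normal_density z * z ^ 0 \<partial>lborel)"
    unfolding smoothed_def
  proof (rule abs_integral_le_std_normal_moment[OF integrable_smoothed_integrand(1)])
    show "\<bar>std_normal_density z * per_ext n (x - s * z)\<bar> \<le> per_ext_bound n * (std_normal_density z * z ^ 0)" for z
      using mult_left_mono[OF abs_per_ext_le normal_density_nonneg] by (simp add: abs_mult mult_ac)
  qed
  then show ?thesis
    by simp
qed

lemma smoothed_lipschitz:
  "\<bar>smoothed n x s - smoothed n x' s'\<bar>
    \<le> per_ext_bound (Suc n) * (\<bar>x - x'\<bar> + \<bar>s - s'\<bar> * (\<integral>z. std_normal_density z * \<bar>z\<bar> \<partial>lborel))"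
proof -
  define B where "B = per_ext_bound (Suc n)"
  have lipschitz: "\<bar>per_ext n y - per_ext n y'\<bar> \<le> B * \<bar>y - y'\<bar>" for y y'
    using field_differentiable_bound[of UNIV "per_ext n" "per_ext (Suc n)" B y y']
      per_ext_has_derivative abs_per_ext_le by (auto simp: B_def)
  have "\<bar>smoothed n x s - smoothed n x' s'\<bar>
      = \<bar>\<integral>z. std_normal_density z * (per_ext n (x - s * z) - per_ext n (x' - s' * z)) \<partial>lborel\<bar>"
    using integrable_smoothed_integrand(1)[of n x s] integrable_smoothed_integrand(1)[of n x' s']
    by (simp add: smoothed_def right_diff_distrib)
  also have "\<dots> \<le> (\<integral>z. B * \<bar>x - x'\<bar> * std_normal_density z
      + B * \<bar>s - s'\<bar> * (std_normal_density z * \<bar>z\<bar>) \<partial>lborel)"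
  proof (rule integral_abs_bound_integral)
    show "integrable lborel (\<lambda>z. std_normal_density z * (per_ext n (x - s * z) - per_ext n (x' - s' * z)))"
      using integrable_smoothed_integrand(1)[of n x s] integrable_smoothed_integrand(1)[of n x' s']
      by (simp add: right_diff_distrib)
    show "integrable lborel (\<lambda>z. B * \<bar>x - x'\<bar> * std_normal_density z
        + B * \<bar>s - s'\<bar> * (std_normal_density z * \<bar>z\<bar>))"
      using integrable_std_normal_moment_abs[of 1] by simp
    show "\<bar>std_normal_density z * (per_ext n (x - s * z) - per_ext n (x' - s' * z))\<bar>
        \<le> B * \<bar>x - x'\<bar> * std_normal_density z + B * \<bar>s - s'\<bar> * (std_normal_density z * \<bar>z\<bar>)" for z
    proof -
      have "(x - s * z) - (x' - s' * z) = (x - x') - (s - s') * z"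
        by (simp add: algebra_simps)
      then have "\<bar>(x - s * z) - (x' - s' * z)\<bar> \<le> \<bar>x - x'\<bar> + \<bar>s - s'\<bar> * \<bar>z\<bar>"
        using abs_triangle_ineq4[of "x - x'" "(s - s') * z"] by (simp add: abs_mult)
      then have "\<bar>per_ext n (x - s * z) - per_ext n (x' - s' * z)\<bar> \<le> B * (\<bar>x - x'\<bar> + \<bar>s - s'\<bar> * \<bar>z\<bar>)"
        using lipschitz[of "x - s * z" "x' - s' * z"] mult_left_mono[OF _ per_ext_bound_nonneg]
        unfolding B_def by (meson order_trans)
      from mult_left_mono[OF this normal_density_nonneg[of 0 1 z]] show ?thesis
        by (simp only: abs_mult abs_of_nonneg[OF normal_density_nonneg]) (simp add: algebra_simps)
    qed
  qed
  also have "\<dots> = B * \<bar>x - x'\<bar> + B * \<bar>s - s'\<bar> * (\<integral>z. std_normal_density z * \<bar>z\<bar> \<partial>lborel)"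
    using integrable_std_normal_moment_abs[of 1] by simp
  finally show ?thesis
    by (simp add: B_def distrib_left mult.assoc)
qed

lemma continuous_on_smoothed: "continuous_on UNIV (\<lambda>p. smoothed n (fst p) (snd p))"
proof (rule continuous_at_imp_continuous_on, clarify)
  fix x s
  let ?L = "\<lambda>p. per_ext_bound (Suc n)
    * (\<bar>fst p - x\<bar> + \<bar>snd p - s\<bar> * (\<integral>z. std_normal_density z * \<bar>z\<bar> \<partial>lborel))"
  have "((\<lambda>p. smoothed n (fst p) (snd p) - smoothed n x s) \<longlongrightarrow> 0) (at (x, s))"
  proof (rule Lim_null_comparison)
    show "\<forall>\<^sub>F p in at (x, s). norm (smoothed n (fst p) (snd p) - smoothed n x s) \<le> ?L p"
      using smoothed_lipschitz by (intro always_eventually) auto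
    have "(?L \<longlongrightarrow> ?L (x, s)) (at (x, s))"
      by (intro tendsto_intros)
    then show "(?L \<longlongrightarrow> 0) (at (x, s))"
      by simp
  qed
  then show "isCont (\<lambda>p. smoothed n (fst p) (snd p)) (x, s)"
    by (simp add: isCont_def LIM_zero_iff)
qed

lemma smoothed_at_0: "smoothed n x 0 = per_ext n x"
  by (simp add: smoothed_def)

lemma smoothed_periodic: "smoothed n (x + 2 * of_int m) s = smoothed n x s"
  using per_ext_periodic[of n "x - s * _" m] by (simp add: smoothed_def algebra_simps)

lemma smoothed_0_minus: "smoothed 0 (- x) s = - smoothed 0 x s"
proof -
  have "smoothed 0 (- x) s
      = \<bar>-1\<bar> *\<^sub>R (\<integral>z. std_normal_density (0 + -1 * z) * per_ext 0 (- x - s * (0 + -1 * z)) \<partial>lborel)"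
    unfolding smoothed_def by (rule lborel_integral_real_affine) simp
  also have "\<dots> = (\<integral>z. - (std_normal_density z * per_ext 0 (x - s * z)) \<partial>lborel)"
    using per_ext_0_minus[of "x - s * _"] by (simp add: std_normal_density_def algebra_simps)
  finally show ?thesis
    by (simp add: smoothed_def)
qed

definition heat :: "nat \<Rightarrow> real \<Rightarrow> real \<Rightarrow> real" where
  "heat n x t = smoothed n x (sqrt (2 * t))"

lemma heat_has_derivative_x: "((\<lambda>x. heat n x t) has_real_derivative heat (Suc n) x t) (at x)"
  unfolding heat_def by (rule smoothed_has_derivative_x)

lemma heat_has_derivative_t:
  assumes "t > 0"
  shows "((\<lambda>t. heat n x t) has_real_derivative heat (Suc (Suc n)) x t) (at t)"
proof -
  have "((\<lambda>t. sqrt (2 * t)) has_real_derivative 1 / sqrt (2 * t)) (at t)"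
    using assms by (auto intro!: derivative_eq_intros simp: field_simps real_sqrt_mult)
  from DERIV_chain2[OF smoothed_has_derivative_s this] show ?thesis
    using assms by (simp add: heat_def)
qed

lemma heat_has_derivative_x_numeral:
  shows "((\<lambda>x. heat 0 x t) has_real_derivative heat 1 x t) (at x)"
    and "((\<lambda>x. heat 1 x t) has_real_derivative heat 2 x t) (at x)"
    and "((\<lambda>x. heat 2 x t) has_real_derivative heat 3 x t) (at x)"
  using heat_has_derivative_x[of 0 t x] heat_has_derivative_x[of 1 t x] heat_has_derivative_x[of 2 t x]
  by (simp_all add: eval_nat_numeral)

lemma continuous_on_heat: "continuous_on UNIV (\<lambda>z. heat n (fst z) (snd z))"
  unfolding heat_def
  by (rule continuous_on_compose2[OF continuous_on_smoothed, where f = "\<lambda>z. (fst z, sqrt (2 * snd z))", simplified])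
     (auto intro!: continuous_intros)

lemma abs_heat_le: "\<bar>heat n x t\<bar> \<le> per_ext_bound n"
  unfolding heat_def by (rule abs_smoothed_le)

lemma heat_at_0: "heat n x 0 = per_ext n x"
  by (simp add: heat_def smoothed_at_0)

lemma heat_periodic: "heat n (x + 2 * of_int m) t = heat n x t"
  unfolding heat_def by (rule smoothed_periodic)

lemma heat_0_minus: "heat 0 (- x) t = - heat 0 x t"
  unfolding heat_def by (rule smoothed_0_minus)

lemma heat_0_boundary: "heat 0 0 t = 0" "heat 0 1 t = 0"
proof -
  show "heat 0 0 t = 0"
    using heat_0_minus[of 0 t] by simp
  have "heat 0 1 t = heat 0 (-1 + 2 * of_int 1) t"
    by simp
  also have "\<dots> = - heat 0 1 t"
    by (simp only: heat_periodic heat_0_minus)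
  finally show "heat 0 1 t = 0"
    by simp
qed

lemma solves_heat_eq_heat_0: "solves_heat_eq (heat 0)"
  unfolding solves_heat_eq_def
proof (intro allI impI conjI ballI)
  fix x t y :: real
  show "(\<lambda>z. heat 0 z t) differentiable (at y)"
    using heat_has_derivative_x real_differentiable_def by blast
  have "deriv (\<lambda>z. heat 0 z t) = (\<lambda>z. heat (Suc 0) z t)"
    using DERIV_imp_deriv[OF heat_has_derivative_x] by (auto simp: fun_eq_iff)
  moreover assume "0 < x \<and> x < 1 \<and> 0 < t"
  ultimately show "\<exists>D. (deriv (\<lambda>z. heat 0 z t) has_real_derivative D) (at x) \<and>
      ((\<lambda>s. heat 0 x s) has_real_derivative D) (at t)"
    using heat_has_derivative_x[of "Suc 0" t x] heat_has_derivative_t[of t 0 x] by auto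
qed

end

locale heat_problem = smooth_initial_datum r0 a b for r0 a b +
  fixes rho :: "real \<Rightarrow> real \<Rightarrow> real"
  assumes rho_cont: "continuous_on ({0..1} \<times> {0..}) (\<lambda>(x, t). rho x t)"
    and rho_heat: "solves_heat_eq rho"
    and rho_boundary: "\<And>t. t > 0 \<Longrightarrow> rho 0 t = 0 \<and> rho 1 t = 0"
    and rho_initial: "\<And>x. x \<in> {0..1} \<Longrightarrow> rho x 0 = r0 x"
begin

lemma rho_eq_heat: "x \<in> {0..1} \<Longrightarrow> t \<ge> 0 \<Longrightarrow> rho x t = heat 0 x t"
proof (rule heat_uniqueness[OF rho_cont rho_heat _ solves_heat_eq_heat_0])
  show "continuous_on ({0..1} \<times> {0..}) (\<lambda>(x, t). heat 0 x t)"
    using continuous_on_subset[OF continuous_on_heat] by (simp add: case_prod_beta')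
qed (use rho_boundary rho_initial heat_0_boundary in \<open>auto simp: heat_at_0 per_ext_0_eq\<close>)

lemma rho_hat_eq_heat:
  assumes "t \<ge> 0"
  shows "rho_hat rho x t = heat 0 x t"
proof -
  define k where "k = \<lfloor>x / 2\<rfloor>"
  define y where "y = x - 2 * of_int k"
  have "of_int k \<le> x / 2" "x / 2 < of_int k + 1"
    unfolding k_def by linarith+
  then have y: "0 \<le> y" "y < 2"
    unfolding y_def by (simp_all add: field_simps)
  have x: "x = y + 2 * of_int k"
    by (simp add: y_def)
  show ?thesis
  proof (cases "y \<le> 1")
    case True
    then have "rho_hat rho x t = heat 0 y t"
      using rho_eq_heat y assms by (simp add: rho_hat_def Let_def y_def k_def)
    then show ?thesis
      by (simp add: x heat_periodic)
  next
    case False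
    then have "rho_hat rho x t = - heat 0 (2 - y) t"
      using rho_eq_heat y assms by (simp add: rho_hat_def Let_def y_def k_def)
    also have "\<dots> = heat 0 ((y - 2) + 2 * of_int (k + 1)) t"
      using heat_0_minus[of "y - 2" t] by (simp only: heat_periodic) simp
    finally show ?thesis
      by (simp add: x algebra_simps)
  qed
qed

lemma rho_hat_x_eq: "t \<ge> 0 \<Longrightarrow> rho_hat_x rho x t = heat 1 x t"
  unfolding rho_hat_x_def using rho_hat_eq_heat DERIV_imp_deriv[OF heat_has_derivative_x_numeral(1)]
  by simp

lemma rho_hat_t_eq:
  assumes "t > 0"
  shows "rho_hat_t rho x t = heat 2 x t"
proof -
  have "((\<lambda>s. heat 0 x s) has_real_derivative heat 2 x t) (at t)"
    using heat_has_derivative_t[OF assms, of 0 x] by (simp add: eval_nat_numeral)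
  then have "((\<lambda>s. rho_hat rho x s) has_real_derivative heat 2 x t) (at t)"
    by (rule has_field_derivative_transform_within_open[of _ _ _ "{0<..}"])
       (use assms rho_hat_eq_heat in auto)
  then show ?thesis
    unfolding rho_hat_t_def by (rule DERIV_imp_deriv)
qed

lemma g_hat_eq: "t > 0 \<Longrightarrow> g_hat rho (x, t) = - (heat 2 x t * heat 1 x t)"
  by (simp add: g_hat_def rho_hat_t_eq rho_hat_x_eq)

lemma deriv_g_hat_eq:
  assumes "t > 0"
  shows "deriv (\<lambda>y. g_hat rho (y, t)) x = - (heat 3 x t * heat 1 x t + heat 2 x t * heat 2 x t)"
proof -
  have "((\<lambda>y. - (heat 2 y t * heat 1 y t)) has_real_derivative
      - (heat 3 x t * heat 1 x t + heat 2 x t * heat 2 x t)) (at x)"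
    using DERIV_minus[OF DERIV_mult[OF heat_has_derivative_x_numeral(3,2)]] by (simp add: algebra_simps)
  then show ?thesis
    using assms by (simp add: g_hat_eq DERIV_imp_deriv)
qed

end

section \<open>The entropy inequality for smooth solutions\<close>

lemma sets_QT: "QT T \<in> sets lborel"
  unfolding QT_def sets_lborel by (intro borel_open open_Times) auto

lemma set_integrable_QT:
  fixes f :: "real \<times> real \<Rightarrow> real"
  assumes "integrable lborel f"
  shows "set_integrable lborel (QT T) f"
  unfolding set_integrable_def by (rule integrable_mult_indicator[OF sets_QT assms])

lemma integrable_continuous_compact_support:
  fixes f :: "'a::euclidean_space \<Rightarrow> real"
  assumes "compact K" and "continuous_on UNIV f" and "\<And>z. z \<notin> K \<Longrightarrow> f z = 0"
  shows "integrable lborel f"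
proof -
  have "integrable lborel (\<lambda>x. indicator K x *\<^sub>R f x)"
    by (rule borel_integrable_compact[OF \<open>compact K\<close> continuous_on_subset[OF assms(2)]]) auto
  moreover have "(\<lambda>x. indicator K x *\<^sub>R f x) = f"
    using assms(3) by (auto simp: fun_eq_iff indicator_def)
  ultimately show ?thesis
    by simp
qed

lemma set_integral_Ioo_FTC:
  fixes F f :: "real \<Rightarrow> real"
  assumes "a \<le> b" and "continuous_on {a..b} F" and "continuous_on {a..b} f"
    and "\<And>t. a < t \<Longrightarrow> t < b \<Longrightarrow> (F has_real_derivative f t) (at t)"
  shows "(LINT t:{a<..<b}|lborel. f t) = F b - F a"
proof -
  have "set_integrable lborel {a..b} f"
    unfolding set_integrable_def by (rule borel_integrable_compact[OF compact_Icc assms(3)])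
  then have integrable: "set_integrable lborel {a<..<b} f"
    by (rule set_integrable_subset) auto
  have "(f has_integral F b - F a) {a..b}"
    by (rule fundamental_theorem_of_calculus_interior[OF assms(1,2)])
       (use assms(4) in \<open>auto simp: has_real_derivative_iff_has_vector_derivative\<close>)
  then have "(f has_integral F b - F a) {a<..<b}"
    by (simp add: has_integral_Icc_iff_Ioo)
  then show ?thesis
    using set_borel_integral_eq_integral(2)[OF integrable] by (simp add: integral_unique)
qed

lemma compact_avoids_large_fst:
  assumes "compact (K :: (real \<times> real) set)"
  obtains R where "R > 0" and "\<And>x t. R \<le> \<bar>x\<bar> \<Longrightarrow> (x, t) \<notin> K"
proof -
  obtain R0 where R0: "\<forall>z\<in>K. norm z \<le> R0"
    using compact_imp_bounded[OF assms] bounded_iff by blast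
  have "(x, t) \<notin> K" if "\<bar>R0\<bar> + 1 \<le> \<bar>x\<bar>" for x t
  proof -
    have "\<bar>x\<bar> \<le> norm (x, t)"
      unfolding norm_Pair by (simp add: real_sqrt_ge_abs1)
    then show ?thesis
      using R0 that by force
  qed
  then show ?thesis
    using that[of "\<bar>R0\<bar> + 1"] by simp
qed

lemma integral_QT_fst:
  fixes f :: "real \<times> real \<Rightarrow> real"
  assumes "set_integrable lborel (QT T) f"
  shows "(LINT z:QT T|lborel. f z) = (LBINT x. LINT t:{0<..<T}|lborel. f (x, t))"
proof -
  have "integrable (lborel \<Otimes>\<^sub>M lborel) (\<lambda>z. indicator (QT T) z *\<^sub>R f z)"
    using assms by (simp add: set_integrable_def lborel_prod)
  from lborel_pair.integral_fst'[OF this] show ?thesis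
    by (simp add: set_lebesgue_integral_def lborel_prod QT_def indicator_times)
qed

lemma integral_QT_snd:
  fixes f :: "real \<times> real \<Rightarrow> real"
  assumes "set_integrable lborel (QT T) f"
  shows "(LINT z:QT T|lborel. f z) = (LINT t:{0<..<T}|lborel. LBINT x. f (x, t))"
proof -
  have "integrable (lborel \<Otimes>\<^sub>M lborel) (\<lambda>(x, t). indicator (QT T) (x, t) *\<^sub>R f (x, t))"
    using assms by (simp add: set_integrable_def lborel_prod case_prod_beta')
  from lborel_pair.integral_snd[OF this] show ?thesis
    by (simp add: set_lebesgue_integral_def lborel_prod QT_def indicator_times case_prod_beta')
qed

lemma DERIV_pair_fst:
  fixes \<phi> :: "real \<times> real \<Rightarrow> real"
  assumes "(\<phi> has_derivative (\<lambda>(h, k). \<phi>x * h + \<phi>t * k)) (at (x, t))"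
  shows "((\<lambda>x. \<phi> (x, t)) has_real_derivative \<phi>x) (at x)"
proof -
  have "((\<lambda>x. (x, t)) has_derivative (\<lambda>h. (h, 0))) (at x)"
    by (auto intro!: derivative_eq_intros)
  from has_derivative_compose[OF this assms] show ?thesis
    by (auto intro: has_derivative_imp_has_field_derivative simp: o_def)
qed

lemma DERIV_pair_snd:
  fixes \<phi> :: "real \<times> real \<Rightarrow> real"
  assumes "(\<phi> has_derivative (\<lambda>(h, k). \<phi>x * h + \<phi>t * k)) (at (x, t))"
  shows "((\<lambda>t. \<phi> (x, t)) has_real_derivative \<phi>t) (at t)"
proof -
  have "((\<lambda>t. (x, t)) has_derivative (\<lambda>k. (0, k))) (at t)"
    by (auto intro!: derivative_eq_intros)
  from has_derivative_compose[OF this assms] show ?thesis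
    by (auto intro: has_derivative_imp_has_field_derivative simp: o_def)
qed

lemma partials_zero_outside_compact_support:
  fixes \<phi> \<phi>x \<phi>t :: "real \<times> real \<Rightarrow> real"
  assumes deriv: "\<And>z. (\<phi> has_derivative (\<lambda>(h, k). \<phi>x z * h + \<phi>t z * k)) (at z)"
    and "compact K" and support: "\<And>z. z \<notin> K \<Longrightarrow> \<phi> z = 0" and "z \<notin> K"
  shows "\<phi>x z = 0" and "\<phi>t z = 0"
proof -
  have "open (- K)"
    using \<open>compact K\<close> by (simp add: compact_imp_closed open_Compl)
  have "(\<phi> has_derivative (\<lambda>_. 0)) (at z)"
    by (rule has_derivative_transform_within_open[OF has_derivative_const \<open>open (- K)\<close>])
       (use \<open>z \<notin> K\<close> support in auto)
  then have "(\<lambda>(h, k). \<phi>x z * h + \<phi>t z * k) = (\<lambda>_. 0)"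
    using has_derivative_unique[OF deriv[of z]] by blast
  from fun_cong[OF this, of "(1, 0)"] fun_cong[OF this, of "(0, 1)"]
  show "\<phi>x z = 0" and "\<phi>t z = 0" by simp_all
qed

lemma integral_QT_time_derivative:
  fixes A At :: "real \<times> real \<Rightarrow> real"
  assumes "T > 0" and K: "compact K" "K \<subseteq> {z. snd z < T}"
    and cont: "continuous_on UNIV A" "continuous_on UNIV At"
    and support: "\<And>z. z \<notin> K \<Longrightarrow> A z = 0 \<and> At z = 0"
    and deriv: "\<And>x t. 0 < t \<Longrightarrow> t < T \<Longrightarrow> ((\<lambda>t. A (x, t)) has_real_derivative At (x, t)) (at t)"
  shows "(LINT z:QT T|lborel. At z) = - (LBINT x. A (x, 0))"
proof -
  have "set_integrable lborel (QT T) At"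
    using integrable_continuous_compact_support[OF K(1) cont(2)] support by (blast intro: set_integrable_QT)
  then have "(LINT z:QT T|lborel. At z) = (LBINT x. LINT t:{0<..<T}|lborel. At (x, t))"
    by (rule integral_QT_fst)
  also have "\<dots> = (LBINT x. - A (x, 0))"
  proof (rule Bochner_Integration.integral_cong[OF refl])
    fix x
    have "continuous_on {0..T} (\<lambda>t. A (x, t))" "continuous_on {0..T} (\<lambda>t. At (x, t))"
      by (auto intro!: continuous_on_compose2[OF cont(1)] continuous_on_compose2[OF cont(2)]
          continuous_intros)
    then have "(LINT t:{0<..<T}|lborel. At (x, t)) = A (x, T) - A (x, 0)"
      using \<open>T > 0\<close> deriv by (intro set_integral_Ioo_FTC) auto
    moreover have "(x, T) \<notin> K"
      using K(2) by auto
    ultimately show "(LINT t:{0<..<T}|lborel. At (x, t)) = - A (x, 0)"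
      using support by simp
  qed
  finally show ?thesis
    by simp
qed

lemma integral_QT_space_derivative:
  fixes B Bx :: "real \<times> real \<Rightarrow> real"
  assumes K: "compact K" and cont: "continuous_on UNIV B" "continuous_on UNIV Bx"
    and support: "\<And>z. z \<notin> K \<Longrightarrow> B z = 0 \<and> Bx z = 0"
    and deriv: "\<And>x t. 0 < t \<Longrightarrow> t < T \<Longrightarrow> ((\<lambda>x. B (x, t)) has_real_derivative Bx (x, t)) (at x)"
  shows "(LINT z:QT T|lborel. Bx z) = 0"
proof -
  obtain R where "R > 0" and outside: "\<And>x t. R \<le> \<bar>x\<bar> \<Longrightarrow> (x, t) \<notin> K"
    using compact_avoids_large_fst[OF K] by blast
  have "set_integrable lborel (QT T) Bx"
    using integrable_continuous_compact_support[OF K cont(2)] support by (blast intro: set_integrable_QT)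
  then have "(LINT z:QT T|lborel. Bx z) = (LINT t:{0<..<T}|lborel. LBINT x. Bx (x, t))"
    by (rule integral_QT_snd)
  also have "\<dots> = (LINT t:{0<..<T}|lborel. 0)"
  proof (rule set_lebesgue_integral_cong, simp, intro allI impI)
    fix t :: real
    assume "t \<in> {0<..<T}"
    have "Bx (x, t) = 0" if "x \<notin> {-R<..<R}" for x
      using that support outside[of x t] by force
    then have "(LBINT x. Bx (x, t)) = (LINT x:{-R<..<R}|lborel. Bx (x, t))"
      unfolding set_lebesgue_integral_def
      by (intro Bochner_Integration.integral_cong) (auto simp: indicator_def)
    also have "\<dots> = B (R, t) - B (-R, t)"
    proof (rule set_integral_Ioo_FTC)
      show "continuous_on {-R..R} (\<lambda>x. B (x, t))" "continuous_on {-R..R} (\<lambda>x. Bx (x, t))"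
        by (auto intro!: continuous_on_compose2[OF cont(1)] continuous_on_compose2[OF cont(2)]
            continuous_intros)
    qed (use \<open>R > 0\<close> \<open>t \<in> {0<..<T}\<close> deriv in auto)
    also have "\<dots> = 0"
      using support outside[of R t] outside[of "-R" t] \<open>R > 0\<close> by simp
    finally show "(LBINT x. Bx (x, t)) = 0" .
  qed
  finally show ?thesis
    by simp
qed

lemma deriv_f_a:
  assumes "0 < e" and "e < x"
  shows "deriv (f_a e) x = - 1 / x\<^sup>2"
proof -
  have "((\<lambda>x. 1 / x) has_real_derivative - 1 / x\<^sup>2) (at x)"
    using assms by (auto intro!: derivative_eq_intros simp: power2_eq_square)
  then have "(f_a e has_real_derivative - 1 / x\<^sup>2) (at x)"
    by (rule has_field_derivative_transform_within_open[of _ _ _ "{e<..}"])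
       (use assms in \<open>auto simp: f_a_def\<close>)
  then show ?thesis
    by (rule DERIV_imp_deriv)
qed

locale smooth_entropy_setting =
  fixes T \<epsilon> :: real and \<phi> \<phi>x \<phi>t :: "real \<times> real \<Rightarrow> real" and K :: "(real \<times> real) set"
    and \<eta> \<eta>' \<Phi> :: "real \<Rightarrow> real" and v vx vxx :: "real \<times> real \<Rightarrow> real"
  assumes T_pos: "T > 0" and eps_pos: "\<epsilon> > 0"
    and \<phi>_deriv: "\<And>z. (\<phi> has_derivative (\<lambda>(h, k). \<phi>x z * h + \<phi>t z * k)) (at z)"
    and \<phi>x_cont: "continuous_on UNIV \<phi>x" and \<phi>t_cont: "continuous_on UNIV \<phi>t"
    and \<phi>_nonneg: "\<And>x t. t \<ge> 0 \<Longrightarrow> \<phi> (x, t) \<ge> 0"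
    and K: "compact K" "K \<subseteq> {z. snd z < T}" and \<phi>_support: "\<And>z. z \<notin> K \<Longrightarrow> \<phi> z = 0"
    and \<eta>_deriv: "\<And>u. (\<eta> has_real_derivative \<eta>' u) (at u)" and \<eta>'_cont: "continuous_on UNIV \<eta>'"
    and \<eta>_mono: "mono \<eta>"
    and \<Phi>_deriv: "\<And>u. (\<Phi> has_real_derivative deriv (f_a \<epsilon>) u * \<eta>' u) (at u)"
    and v_cont: "continuous_on UNIV v" "continuous_on UNIV vx" "continuous_on UNIV vxx"
    and v_deriv_t: "\<And>x t. 0 < t \<Longrightarrow> ((\<lambda>t. v (x, t)) has_real_derivative vxx (x, t)) (at t)"
    and v_deriv_x: "\<And>x t. ((\<lambda>x. v (x, t)) has_real_derivative vx (x, t)) (at x)"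
    and vx_deriv_x: "\<And>x t. ((\<lambda>x. vx (x, t)) has_real_derivative vxx (x, t)) (at x)"
begin

text \<open>v, vx, vxx stand for \<rho>-hat_x, \<rho>-hat_xx = \<rho>-hat_t and \<rho>-hat_xxx, so that g and g_x below
  are g-hat and its x-derivative.\<close>

definition w :: "real \<times> real \<Rightarrow> real" where
  "w z = G_eps \<epsilon> (v z)"

definition g :: "real \<times> real \<Rightarrow> real" where
  "g z = - (vx z * v z)"

definition g_x :: "real \<times> real \<Rightarrow> real" where
  "g_x z = - (vxx z * v z + vx z * vx z)"

definition mass :: "real \<times> real \<Rightarrow> real" where
  "mass z = \<eta> (w z) * \<phi> z"

definition mass_t :: "real \<times> real \<Rightarrow> real" where
  "mass_t z = \<eta>' (w z) * (v z * vxx z / w z) * \<phi> z + \<eta> (w z) * \<phi>t z"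

definition flux :: "real \<times> real \<Rightarrow> real" where
  "flux z = \<Phi> (w z) * g z * \<phi> z"

definition flux_x :: "real \<times> real \<Rightarrow> real" where
  "flux_x z = - \<eta>' (w z) / (w z)\<^sup>2 * (v z * vx z / w z) * g z * \<phi> z
    + \<Phi> (w z) * (g_x z * \<phi> z + g z * \<phi>x z)"

definition dissipation :: "real \<times> real \<Rightarrow> real" where
  "dissipation z = \<eta>' (w z) * \<phi> z * (vx z)\<^sup>2 * \<epsilon>\<^sup>2 / (w z) ^ 3"

lemma w_ge_eps: "\<epsilon> \<le> w z"
  using real_sqrt_le_mono[of "\<epsilon>\<^sup>2" "(v z)\<^sup>2 + \<epsilon>\<^sup>2"] eps_pos by (simp add: w_def G_eps_def)

lemma w_pos: "0 < w z"
  using w_ge_eps[of z] eps_pos by linarith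

lemma w_nonzero: "w z \<noteq> 0"
  using w_pos[of z] by simp

lemma w_squared: "(w z)\<^sup>2 = (v z)\<^sup>2 + \<epsilon>\<^sup>2"
  by (simp add: w_def G_eps_def add_nonneg_nonneg)

lemma continuous_on_w: "continuous_on UNIV w"
  unfolding w_def[abs_def] G_eps_def by (intro continuous_intros v_cont)

lemma continuous_on_comp_w:
  assumes "\<And>u. (f has_real_derivative f' u) (at u)"
  shows "continuous_on UNIV (\<lambda>z. f (w z))"
  using continuous_on_compose2[OF _ continuous_on_w] assms
  by (metis DERIV_continuous continuous_at_imp_continuous_on top_greatest)

lemma continuous_on_\<phi>: "continuous_on UNIV \<phi>"
  using \<phi>_deriv by (meson has_derivative_continuous continuous_at_imp_continuous_on)

lemmas entropy_continuity = continuous_on_w continuous_on_\<phi> \<phi>x_cont \<phi>t_cont v_cont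
  continuous_on_comp_w[OF \<eta>_deriv] continuous_on_comp_w[OF \<Phi>_deriv]
  continuous_on_compose2[OF \<eta>'_cont continuous_on_w, simplified]

lemma entropy_terms_continuous:
  "continuous_on UNIV mass" "continuous_on UNIV mass_t" "continuous_on UNIV flux"
  "continuous_on UNIV flux_x" "continuous_on UNIV dissipation"
  using w_pos unfolding mass_def[abs_def] mass_t_def[abs_def] flux_def[abs_def] flux_x_def[abs_def]
    dissipation_def[abs_def] g_def[abs_def] g_x_def[abs_def]
  by (auto intro!: continuous_intros entropy_continuity simp: w_nonzero)

lemma entropy_terms_outside_K:
  assumes "z \<notin> K"
  shows "mass z = 0 \<and> mass_t z = 0 \<and> flux z = 0 \<and> flux_x z = 0"
  using \<phi>_support[OF assms] partials_zero_outside_compact_support[OF \<phi>_deriv K(1) \<phi>_support assms]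
  by (simp add: mass_def mass_t_def flux_def flux_x_def)

lemma DERIV_w_t:
  "0 < t \<Longrightarrow> ((\<lambda>t. w (x, t)) has_real_derivative v (x, t) * vxx (x, t) / w (x, t)) (at t)"
  unfolding w_def G_eps_def using DERIV_sqrt_square_plus_square[OF eps_pos v_deriv_t] .

lemma DERIV_w_x: "((\<lambda>x. w (x, t)) has_real_derivative v (x, t) * vx (x, t) / w (x, t)) (at x)"
  unfolding w_def G_eps_def using DERIV_sqrt_square_plus_square[OF eps_pos v_deriv_x] .

lemma mass_has_derivative_t:
  assumes "0 < t"
  shows "((\<lambda>t. mass (x, t)) has_real_derivative mass_t (x, t)) (at t)"
proof -
  from DERIV_mult[OF DERIV_chain2[OF \<eta>_deriv DERIV_w_t[OF assms]] DERIV_pair_snd[OF \<phi>_deriv]]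
  show ?thesis
    unfolding mass_def mass_t_def by (rule DERIV_cong) (simp add: algebra_simps)
qed

lemma flux_has_derivative_x:
  "((\<lambda>x. flux (x, t)) has_real_derivative flux_x (x, t)) (at x)"
proof -
  have \<Phi>': "deriv (f_a \<epsilon>) (w (x, t)) * \<eta>' (w (x, t)) * (v (x, t) * vx (x, t) / w (x, t))
      = - \<eta>' (w (x, t)) / (w (x, t))\<^sup>2 * (v (x, t) * vx (x, t) / w (x, t))"
  proof (cases "v (x, t) = 0")
    case False
    then have "\<epsilon>\<^sup>2 < (w (x, t))\<^sup>2"
      using w_squared[of "(x, t)"] by simp
    then have "\<epsilon> < w (x, t)"
      using w_pos[of "(x, t)"] by (simp add: power_less_imp_less_base)
    then show ?thesis
      using deriv_f_a[OF eps_pos] by simp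
  qed simp
  have g': "((\<lambda>x. g (x, t)) has_real_derivative g_x (x, t)) (at x)"
    using DERIV_minus[OF DERIV_mult[OF vx_deriv_x v_deriv_x]]
    unfolding g_def g_x_def by (simp add: algebra_simps)
  have \<Phi>w: "((\<lambda>x. \<Phi> (w (x, t))) has_real_derivative
      - \<eta>' (w (x, t)) / (w (x, t))\<^sup>2 * (v (x, t) * vx (x, t) / w (x, t))) (at x)"
    by (rule DERIV_cong[OF DERIV_chain2[OF \<Phi>_deriv DERIV_w_x] \<Phi>'])
  from DERIV_mult[OF DERIV_mult[OF \<Phi>w g'] DERIV_pair_fst[OF \<phi>_deriv]]
  show ?thesis
    unfolding flux_def flux_x_def by (rule DERIV_cong) (simp add: algebra_simps)
qed

lemma dissipation_nonneg: "0 < t \<Longrightarrow> 0 \<le> dissipation (x, t)"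
  using mono_on_imp_deriv_nonneg[of UNIV \<eta>, OF _ \<eta>_deriv] \<eta>_mono \<phi>_nonneg[of t x] w_pos[of "(x, t)"]
  unfolding dissipation_def by (intro divide_nonneg_pos mult_nonneg_nonneg) auto

lemma entropy_integrand_eq:
  "\<eta> (w z) * \<phi>t z + \<Phi> (w z) * g z * \<phi>x z + (\<Phi> (w z) - f_a \<epsilon> (w z) * \<eta>' (w z)) * g_x z * \<phi> z
    = mass_t z + flux_x z + dissipation z"
proof -
  have f_a: "f_a \<epsilon> (w z) = 1 / w z"
    using w_ge_eps[of z] by (simp add: f_a_def)
  have eps: "\<epsilon>\<^sup>2 = (w z)\<^sup>2 - (v z)\<^sup>2"
    using w_squared[of z] by simp
  show ?thesis
    using w_nonzero[of z] unfolding mass_t_def flux_x_def dissipation_def g_def g_x_def f_a eps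
    by (simp add: field_simps power2_eq_square power3_eq_cube)
qed

lemma entropy_inequality:
  defines "F \<equiv> \<lambda>z. \<eta> (w z) * \<phi>t z + \<Phi> (w z) * g z * \<phi>x z
    + (\<Phi> (w z) - f_a \<epsilon> (w z) * \<eta>' (w z)) * g_x z * \<phi> z"
  shows "set_integrable lborel (QT T) F" and "integrable lborel (\<lambda>x. mass (x, 0))"
    and "(LINT z:QT T|lborel. F z) + (LBINT x. mass (x, 0)) \<ge> 0"
proof -
  have F_eq: "F = (\<lambda>z. mass_t z + flux_x z + dissipation z)"
    unfolding F_def using entropy_integrand_eq by auto
  have "\<phi>x z = 0" "\<phi>t z = 0" "dissipation z = 0" if "z \<notin> K" for z
    using partials_zero_outside_compact_support[OF \<phi>_deriv K(1) \<phi>_support that] \<phi>_support[OF that]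
    by (simp_all add: dissipation_def)
  then have integrable: "set_integrable lborel (QT T) f"
    if "f \<in> {mass_t, flux_x, dissipation}" for f
    using that entropy_terms_continuous entropy_terms_outside_K
    by (auto intro!: set_integrable_QT integrable_continuous_compact_support[OF K(1)])
  then show "set_integrable lborel (QT T) F"
    unfolding F_eq by (intro set_integral_add) auto
  have "continuous_on UNIV (\<lambda>x. mass (x, 0))"
    by (auto intro!: continuous_on_compose2[OF entropy_terms_continuous(1)] continuous_intros)
  moreover obtain R where "\<And>x t. R \<le> \<bar>x\<bar> \<Longrightarrow> (x, t) \<notin> K"
    using compact_avoids_large_fst[OF K(1)] by blast
  ultimately show "integrable lborel (\<lambda>x. mass (x, 0))"
    using entropy_terms_outside_K
    by (intro integrable_continuous_compact_support[OF compact_Icc[of "-R" R]]) force+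
  have "(LINT z:QT T|lborel. mass_t z) = - (LBINT x. mass (x, 0))"
    using integral_QT_time_derivative[OF T_pos K entropy_terms_continuous(1,2)]
      entropy_terms_outside_K mass_has_derivative_t by blast
  moreover have "(LINT z:QT T|lborel. flux_x z) = 0"
    using integral_QT_space_derivative[OF K(1) entropy_terms_continuous(3,4)]
      entropy_terms_outside_K flux_has_derivative_x by blast
  moreover have "(LINT z:QT T|lborel. dissipation z) \<ge> 0"
    unfolding set_lebesgue_integral_def
    by (rule Bochner_Integration.integral_nonneg) (auto simp: QT_def indicator_def dissipation_nonneg)
  ultimately show "(LINT z:QT T|lborel. F z) + (LBINT x. mass (x, 0)) \<ge> 0"
    unfolding F_eq using integrable by (simp add: set_integral_add)
qed

end

lemma G_eps_le: "G_eps \<epsilon> p \<le> \<bar>p\<bar> + \<bar>\<epsilon>\<bar>"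
proof -
  have "p\<^sup>2 + \<epsilon>\<^sup>2 \<le> (\<bar>p\<bar> + \<bar>\<epsilon>\<bar>)\<^sup>2"
    by (simp add: power2_eq_square algebra_simps)
  then have "sqrt (p\<^sup>2 + \<epsilon>\<^sup>2) \<le> sqrt ((\<bar>p\<bar> + \<bar>\<epsilon>\<bar>)\<^sup>2)"
    by (rule real_sqrt_le_mono)
  then show ?thesis
    by (simp add: G_eps_def)
qed

lemma (in smooth_initial_datum) smooth_entropy_setting_heat:
  assumes "T > 0" and "\<epsilon> > 0" and "test_fun T \<phi> \<phi>x \<phi>t"
    and "compact K" and "K \<subseteq> {z. snd z < T}" and "\<And>z. z \<notin> K \<Longrightarrow> \<phi> z = 0"
    and "\<forall>u. (\<eta> has_real_derivative \<eta>' u) (at u)" and "continuous_on UNIV \<eta>'" and "mono \<eta>"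
    and "\<forall>u. (\<Phi> has_real_derivative deriv (f_a \<epsilon>) u * \<eta>' u) (at u)"
  shows "smooth_entropy_setting T \<epsilon> \<phi> \<phi>x \<phi>t K \<eta> \<eta>' \<Phi>
    (\<lambda>z. heat 1 (fst z) (snd z)) (\<lambda>z. heat 2 (fst z) (snd z)) (\<lambda>z. heat 3 (fst z) (snd z))"
proof unfold_locales
  fix x t :: real
  assume "0 < t"
  from heat_has_derivative_t[OF this, of 1 x]
  show "((\<lambda>t. heat 1 (fst (x, t)) (snd (x, t))) has_real_derivative heat 3 (fst (x, t)) (snd (x, t))) (at t)"
    by (simp add: eval_nat_numeral)
qed (use assms in \<open>auto simp: test_fun_def continuous_on_heat heat_has_derivative_x eval_nat_numeral\<close>)

context heat_problem
begin

lemma rho_hat_x_G_eps_measurable: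
  "set_borel_measurable lborel (QT T) (\<lambda>z. G_eps \<epsilon> (rho_hat_x rho (fst z) (snd z)))"
proof -
  have [measurable]: "(\<lambda>z. G_eps \<epsilon> (heat 1 (fst z) (snd z))) \<in> borel_measurable borel"
    unfolding G_eps_def by (intro borel_measurable_continuous_onI continuous_intros continuous_on_heat)
  have [measurable]: "QT T \<in> sets borel"
    using sets_QT by simp
  have "(\<lambda>z. indicator (QT T) z *\<^sub>R G_eps \<epsilon> (heat 1 (fst z) (snd z))) \<in> borel_measurable lborel"
    by measurable
  moreover have "(\<lambda>z. indicator (QT T) z *\<^sub>R G_eps \<epsilon> (rho_hat_x rho (fst z) (snd z)))
      = (\<lambda>z. indicator (QT T) z *\<^sub>R G_eps \<epsilon> (heat 1 (fst z) (snd z)))"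
    by (auto simp: fun_eq_iff indicator_def QT_def rho_hat_x_eq)
  ultimately show ?thesis
    unfolding set_borel_measurable_def by simp
qed

lemma rho_hat_x_G_eps_bounded:
  "\<exists>C. AE z in lborel. z \<in> QT T \<longrightarrow> \<bar>G_eps \<epsilon> (rho_hat_x rho (fst z) (snd z))\<bar> \<le> C"
proof (intro exI AE_I2 impI)
  fix z :: "real \<times> real"
  assume "z \<in> QT T"
  then have "rho_hat_x rho (fst z) (snd z) = heat 1 (fst z) (snd z)"
    by (intro rho_hat_x_eq) (auto simp: QT_def)
  then show "\<bar>G_eps \<epsilon> (rho_hat_x rho (fst z) (snd z))\<bar> \<le> per_ext_bound 1 + \<bar>\<epsilon>\<bar>"
    using G_eps_le[of \<epsilon> "heat 1 (fst z) (snd z)"] abs_heat_le[of 1 "fst z" "snd z"]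
    by (simp add: G_eps_def)
qed

lemma rho_hat_entropy_inequality:
  assumes "T > 0" and "\<epsilon> > 0" and "test_fun T \<phi> \<phi>x \<phi>t"
    and "\<forall>u. (\<eta> has_real_derivative \<eta>' u) (at u)" and "continuous_on UNIV \<eta>'" and "mono \<eta>"
    and "\<forall>u. (\<Phi> has_real_derivative deriv (f_a \<epsilon>) u * \<eta>' u) (at u)"
  shows "let h = (\<lambda>u. \<Phi> u - f_a \<epsilon> u * \<eta>' u);
             gx = (\<lambda>z. deriv (\<lambda>y. g_hat rho (y, snd z)) (fst z));
             v = (\<lambda>z. G_eps \<epsilon> (rho_hat_x rho (fst z) (snd z)));
             F = (\<lambda>z. \<eta> (v z) * \<phi>t z + \<Phi> (v z) * g_hat rho z * \<phi>x z + h (v z) * gx z * \<phi> z);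
             F0 = (\<lambda>x. \<eta> (G_eps \<epsilon> (rho_hat_x rho x 0)) * \<phi> (x, 0))
         in set_integrable lborel (QT T) F \<and> integrable lborel F0 \<and>
            (LINT z:QT T|lborel. F z) + (LINT x|lborel. F0 x) \<ge> 0"
proof -
  obtain K where K: "compact K" "K \<subseteq> {z. snd z < T}" "\<And>z. z \<notin> K \<Longrightarrow> \<phi> z = 0"
    using \<open>test_fun T \<phi> \<phi>x \<phi>t\<close> unfolding test_fun_def by blast
  interpret E: smooth_entropy_setting T \<epsilon> \<phi> \<phi>x \<phi>t K \<eta> \<eta>' \<Phi>
    "\<lambda>z. heat 1 (fst z) (snd z)" "\<lambda>z. heat 2 (fst z) (snd z)" "\<lambda>z. heat 3 (fst z) (snd z)"
    by (rule smooth_entropy_setting_heat[OF assms(1-3) K assms(4-7)])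
  let ?v = "\<lambda>z. G_eps \<epsilon> (rho_hat_x rho (fst z) (snd z))"
  let ?F = "\<lambda>z. \<eta> (?v z) * \<phi>t z + \<Phi> (?v z) * g_hat rho z * \<phi>x z
    + (\<Phi> (?v z) - f_a \<epsilon> (?v z) * \<eta>' (?v z)) * deriv (\<lambda>y. g_hat rho (y, snd z)) (fst z) * \<phi> z"
  let ?E = "\<lambda>z. \<eta> (E.w z) * \<phi>t z + \<Phi> (E.w z) * E.g z * \<phi>x z
    + (\<Phi> (E.w z) - f_a \<epsilon> (E.w z) * \<eta>' (E.w z)) * E.g_x z * \<phi> z"
  have F_eq: "?F z = ?E z" if "z \<in> QT T" for z
  proof -
    obtain x t where z: "z = (x, t)"
      by fastforce
    have "t > 0"
      using that by (simp add: z QT_def)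
    show ?thesis
      unfolding z fst_conv snd_conv deriv_g_hat_eq[OF \<open>t > 0\<close>]
      unfolding g_hat_eq[OF \<open>t > 0\<close>] rho_hat_x_eq[OF less_imp_le[OF \<open>t > 0\<close>]] E.w_def E.g_def E.g_x_def
      by simp
  qed
  have F0_eq: "(\<lambda>x. \<eta> (G_eps \<epsilon> (rho_hat_x rho x 0)) * \<phi> (x, 0)) = (\<lambda>x. E.mass (x, 0))"
    unfolding E.mass_def E.w_def rho_hat_x_eq[OF order_refl] by simp
  have "set_integrable lborel (QT T) ?F = set_integrable lborel (QT T) ?E"
    by (rule set_integrable_cong) (simp_all add: F_eq)
  then have "set_integrable lborel (QT T) ?F"
    using E.entropy_inequality(1) by blast
  moreover have "(LINT z:QT T|lborel. ?F z) = (LINT z:QT T|lborel. ?E z)"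
    using F_eq sets_QT by (intro set_lebesgue_integral_cong) auto
  ultimately show ?thesis
    unfolding Let_def F0_eq using E.entropy_inequality(2,3) by simp
qed

end

theorem lemma5p3:
  fixes T \<epsilon> :: real and \<rho>0 :: "real \<Rightarrow> real" and \<rho> :: "real \<Rightarrow> real \<Rightarrow> real"
  assumes T: "T > 0" and eps: "\<epsilon> > 0"
    and rho0_smooth: "\<forall>n x. (deriv ^^ n) \<rho>0 differentiable (at x)"
    and rho0_supp: "\<exists>a b. 0 < a \<and> a \<le> b \<and> b < 1 \<and> (\<forall>x. x < a \<or> b < x \<longrightarrow> \<rho>0 x = 0)"
    and rho_cont: "continuous_on ({0..1} \<times> {0..}) (\<lambda>(x,t). \<rho> x t)"
    and rho_heat: "\<forall>x t. 0 < x \<and> x < 1 \<and> 0 < t \<longrightarrow>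
        (\<forall>y\<in>{0<..<1}. (\<lambda>z. \<rho> z t) differentiable (at y)) \<and>
        (\<exists>D. (deriv (\<lambda>z. \<rho> z t) has_real_derivative D) (at x) \<and>
             ((\<lambda>s. \<rho> x s) has_real_derivative D) (at t))"
    and rho_bc: "\<forall>t>0. \<rho> 0 t = 0 \<and> \<rho> 1 t = 0"
    and rho_init: "\<forall>x\<in>{0..1}. \<rho> x 0 = \<rho>0 x"
  shows "entropy_subsol T (g_hat \<rho>) (f_a \<epsilon>)
           (\<lambda>z. G_eps \<epsilon> (rho_hat_x \<rho> (fst z) (snd z)))
           (\<lambda>x. G_eps \<epsilon> (rho_hat_x \<rho> x 0))"
proof -
  obtain a b where "0 < a" "a \<le> b" "b < 1" "\<forall>x. x < a \<or> b < x \<longrightarrow> \<rho>0 x = 0"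
    using rho0_supp by blast
  then interpret heat_problem \<rho>0 a b \<rho>
    using rho0_smooth rho_cont rho_heat rho_bc rho_init
    by unfold_locales (auto simp: solves_heat_eq_def)
  show ?thesis
    unfolding entropy_subsol_def Let_def
    using rho_hat_x_G_eps_measurable rho_hat_x_G_eps_bounded
      rho_hat_entropy_inequality[OF T eps, unfolded Let_def]
    by blast
qed

end
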